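(* Let $n$ be a positive integer and $k$ an even integer with $n/2+1\le k\le n-1$. Then $H_{n,k}$ is a core.
   Context: $H_{n,k}$ is the graph whose vertices are the even-weight elements of $\mathbb{Z}_2^n$, with $x\sim y$ iff $x$ and $y$ differ in exactly $k$ coordinates. A graph is a core if every homomorphism (adjacency-preserving map) from it to itself is an automorphism. *)

theory Defs
  imports Main
begin

text \<open>An element x of Z_2^n is identified with its support, a subset of {0..<n}.
  Hamming distance = card of the symmetric difference; weight = card.\<close>

definition hdist :: "nat set \<Rightarrow> nat set \<Rightarrow> nat" where
  "hdist x y = card ((x - y) \<union> (y - x))"

definition H_verts :: "nat \<Rightarrow> nat set set" where
  "H_verts n = {x. x \<subseteq> {0..<n} \<and> even (card x)}"

definition H_adj :: "nat \<Rightarrow> nat \<Rightarrow> nat set \<Rightarrow> nat set \<Rightarrow> bool" where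
  "H_adj n k x y \<longleftrightarrow> x \<in> H_verts n \<and> y \<in> H_verts n \<and> hdist x y = k"

definition is_endo :: "'a set \<Rightarrow> ('a \<Rightarrow> 'a \<Rightarrow> bool) \<Rightarrow> ('a \<Rightarrow> 'a) \<Rightarrow> bool" where
  "is_endo V E f \<longleftrightarrow> f ` V \<subseteq> V \<and> (\<forall>x\<in>V. \<forall>y\<in>V. E x y \<longrightarrow> E (f x) (f y))"

definition is_auto :: "'a set \<Rightarrow> ('a \<Rightarrow> 'a \<Rightarrow> bool) \<Rightarrow> ('a \<Rightarrow> 'a) \<Rightarrow> bool" where
  "is_auto V E f \<longleftrightarrow> bij_betw f V V \<and> (\<forall>x\<in>V. \<forall>y\<in>V. E x y \<longleftrightarrow> E (f x) (f y))"

definition is_core :: "'a set \<Rightarrow> ('a \<Rightarrow> 'a \<Rightarrow> bool) \<Rightarrow> bool" where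
  "is_core V E \<longleftrightarrow> (\<forall>f. is_endo V E f \<longrightarrow> is_auto V E f)"

end

theory Submission
  imports Defs Complex_Main
begin

text \<open>\<open>H\<^sub>n\<^sub>,\<^sub>k\<close> is the Cayley graph of the even-weight code with the \<open>k\<close>-subsets as connection
  set, so its eigenvalues are the Krawtchouk values \<open>K\<^sub>k(|a|)\<close>. For even \<open>k > n/2\<close> the least
  eigenvalue is \<open>K\<^sub>k(1) = C(n,k)(n - 2k)/n\<close>, attained only at \<open>|a| \<in> {1, n - 1}\<close>; on even-weight
  vectors these two levels give the same characters \<open>x \<mapsto> (-1)\<^bsup>[j \<in> x]\<^esup>\<close>.
  For an endomorphism \<open>f\<close>, the \<open>\<plusminus>1\<close>-valued coordinate functions \<open>x \<mapsto> (-1)\<^bsup>[i \<in> f x]\<^esup>\<close> each have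
  quadratic form at least the least eigenvalue times their squared norm, while edge preservation
  makes the sum of these forms equal to \<open>n\<close> times that bound. Hence every coordinate function
  lies in the least eigenspace, and a \<open>\<plusminus>1\<close>-valued combination of the characters \<open>(-1)\<^bsup>[j \<in> x]\<^esup>\<close>
  is one of them up to sign: coordinate \<open>i\<close> of \<open>f x\<close> copies coordinate \<open>\<pi> i\<close> of \<open>x\<close>, up to a
  fixed flip. Counting the \<open>k\<close> coordinates changed along an edge forces \<open>\<pi>\<close> to be a
  permutation, so \<open>f\<close> is an isometry and therefore an automorphism.\<close>

section \<open>Krawtchouk numbers\<close>

text \<open>\<open>kraw U a r\<close> is the Krawtchouk value \<open>K\<^sub>r(card a)\<close> for \<open>n = card U\<close>.\<close>

definition kraw :: "nat set \<Rightarrow> nat set \<Rightarrow> nat \<Rightarrow> int" where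
  "kraw U a r = (\<Sum>R\<in>{R. R \<subseteq> U \<and> card R = r}. (-1)^card (R \<inter> a))"

lemma subsets_card_Suc_split:
  assumes fin: "finite U" and p: "p \<in> U"
  shows "{R. R \<subseteq> U \<and> card R = Suc r}
       = {R. R \<subseteq> U - {p} \<and> card R = Suc r} \<union> insert p ` {R. R \<subseteq> U - {p} \<and> card R = r}"
    (is "_ = ?A \<union> insert p ` ?B")
proof (rule set_eqI, rule iffI)
  fix R assume "R \<in> {R. R \<subseteq> U \<and> card R = Suc r}"
  hence R: "R \<subseteq> U" "card R = Suc r" by auto
  show "R \<in> ?A \<union> insert p ` ?B"
  proof (cases "p \<in> R")
    case True
    have "finite R" using R fin finite_subset by blast
    hence "card (R - {p}) = r" using R True by simp
    moreover have "R = insert p (R - {p})" using True by blast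
    ultimately show ?thesis using R by blast
  next
    case False thus ?thesis using R by blast
  qed
next
  fix R assume "R \<in> ?A \<union> insert p ` ?B"
  thus "R \<in> {R. R \<subseteq> U \<and> card R = Suc r}"
  proof
    assume "R \<in> ?A" thus ?thesis by auto
  next
    assume "R \<in> insert p ` ?B"
    then obtain R' where R': "R' \<subseteq> U - {p}" "card R' = r" "R = insert p R'" by blast
    have "finite R'" using R' fin finite_subset by blast
    moreover have "p \<notin> R'" using R' by blast
    ultimately show ?thesis using R' p by auto
  qed
qed

lemma minus_one_power_card_insert_Int:
  assumes fR: "finite R" and pR: "p \<notin> R"
  shows "(-1::int)^card (insert p R \<inter> a) = (if p \<in> a then -1 else 1) * (-1)^card (R \<inter> (a - {p}))"
proof -
  have e: "R \<inter> (a - {p}) = R \<inter> a" using pR by blast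
  show ?thesis
  proof (cases "p \<in> a")
    case True
    hence "insert p R \<inter> a = insert p (R \<inter> a)" by blast
    moreover have "p \<notin> R \<inter> a" using pR by blast
    ultimately have "card (insert p R \<inter> a) = Suc (card (R \<inter> a))" using fR by simp
    thus ?thesis using True e by simp
  next
    case False
    hence "insert p R \<inter> a = R \<inter> a" by blast
    thus ?thesis using False e by simp
  qed
qed

lemma kraw_remove:
  assumes fin: "finite U" and p: "p \<in> U"
  shows "kraw U a (Suc r) = kraw (U - {p}) (a - {p}) (Suc r)
           + (if p \<in> a then -1 else 1) * kraw (U - {p}) (a - {p}) r"
proof -
  let ?U' = "U - {p}"
  let ?A = "{R. R \<subseteq> ?U' \<and> card R = Suc r}"
  let ?B = "{R. R \<subseteq> ?U' \<and> card R = r}"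
  have fU': "finite ?U'" using fin by simp
  note eq = subsets_card_Suc_split[OF fin p, of r]
  have disj: "?A \<inter> insert p ` ?B = {}" by blast
  have fA: "finite ?A" using fU' by (simp add: finite_subset)
  have fB: "finite ?B" using fU' by (simp add: finite_subset)
  have inj: "inj_on (insert p) ?B"
    by (rule inj_onI) (metis (no_types, lifting) Diff_insert_absorb insert_Diff_single mem_Collect_eq subset_Diff_insert)
  have s1: "(\<Sum>R\<in>?A. (-1::int)^card (R \<inter> a)) = kraw ?U' (a - {p}) (Suc r)"
    unfolding kraw_def
    by (rule sum.cong) (auto simp: Int_Diff dest!: subsetD intro!: arg_cong[where f="\<lambda>X. (-1::int)^card X"])
  have s2: "(\<Sum>R\<in>insert p ` ?B. (-1::int)^card (R \<inter> a)) =
      (if p \<in> a then -1 else 1) * kraw ?U' (a - {p}) r"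
  proof -
    have "(\<Sum>R\<in>insert p ` ?B. (-1::int)^card (R \<inter> a)) = (\<Sum>R\<in>?B. (-1)^card (insert p R \<inter> a))"
      by (simp add: sum.reindex[OF inj])
    also have "\<dots> = (\<Sum>R\<in>?B. (if p \<in> a then -1 else 1) * (-1)^card (R \<inter> (a - {p})))"
    proof (rule sum.cong[OF refl])
      fix R assume "R \<in> ?B"
      hence "finite R" "p \<notin> R" using fU' finite_subset by auto
      thus "(-1::int)^card (insert p R \<inter> a) = (if p \<in> a then -1 else 1) * (-1)^card (R \<inter> (a - {p}))"
        by (rule minus_one_power_card_insert_Int)
    qed
    also have "\<dots> = (if p \<in> a then -1 else 1) * kraw ?U' (a - {p}) r"
      unfolding kraw_def by (simp add: sum_distrib_left)
    finally show ?thesis .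
  qed
  show ?thesis
    unfolding kraw_def[of U] eq
    by (subst sum.union_disjoint[OF fA finite_imageI[OF fB] disj]) (use s1 s2 in \<open>simp add: kraw_def\<close>)
qed

lemma kraw_0: assumes "finite U" shows "kraw U a 0 = 1"
proof -
  have "{R. R \<subseteq> U \<and> card R = 0} = {{}}"
  proof (rule set_eqI, rule iffI)
    fix R assume "R \<in> {R. R \<subseteq> U \<and> card R = 0}"
    hence "R \<subseteq> U" "card R = 0" by auto
    hence "R = {}" using assms by (meson card_0_eq finite_subset)
    thus "R \<in> {{}}" by simp
  qed simp
  thus ?thesis unfolding kraw_def by simp
qed

lemma kraw_empty: assumes "finite U" shows "kraw U {} r = int (card U choose r)"
  unfolding kraw_def using n_subsets[OF assms, of r] by simp

lemma kraw_1: assumes "finite U" "a \<subseteq> U" shows "kraw U a 1 = int (card U) - 2 * int (card a)"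
proof -
  have e: "{R. R \<subseteq> U \<and> card R = 1} = (\<lambda>x. {x}) ` U"
    by (auto simp: card_1_singleton_iff)
  have "kraw U a 1 = (\<Sum>x\<in>U. (-1::int)^card ({x} \<inter> a))"
    unfolding kraw_def e by (subst sum.reindex) (auto intro: inj_onI)
  also have "\<dots> = (\<Sum>x\<in>U. if x \<in> a then -1 else 1)"
    by (rule sum.cong) auto
  also have "\<dots> = - int (card (U \<inter> a)) + int (card (U - a))"
    using assms(1) by (simp add: sum.If_cases Diff_eq)
  also have "\<dots> = int (card U) - 2 * int (card a)"
  proof -
    have "U \<inter> a = a" using assms by blast
    moreover have "card (U - a) = card U - card a" using assms by (simp add: card_Diff_subset finite_subset)
    moreover have "card a \<le> card U" using assms by (simp add: card_mono)
    ultimately show ?thesis by simp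
  qed
  finally show ?thesis .
qed

lemma minus_one_power_diff: "j \<le> m \<Longrightarrow> (-1::'a::comm_ring_1)^(m - j) = (-1)^m * (-1)^j"
proof -
  assume "j \<le> m"
  then obtain d where m: "m = j + d" using le_Suc_ex by blast
  have "(-1::'a)^j * (-1)^j = 1" by (simp add: power_mult_distrib[symmetric])
  thus ?thesis unfolding m by (simp add: power_add mult_ac)
qed

lemma kraw_complement:
  assumes fin: "finite U" and a: "a \<subseteq> U" and r: "r \<le> card U"
  shows "kraw U a (card U - r) = (-1)^card a * kraw U a r"
proof -
  let ?A = "{R. R \<subseteq> U \<and> card R = r}"
  have inj: "inj_on (\<lambda>R. U - R) ?A" by (rule inj_onI) auto
  have img: "(\<lambda>R. U - R) ` ?A = {R. R \<subseteq> U \<and> card R = card U - r}"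
  proof (rule set_eqI, rule iffI)
    fix R' assume "R' \<in> (\<lambda>R. U - R) ` ?A"
    then obtain R where "R \<subseteq> U" "card R = r" "R' = U - R" by blast
    thus "R' \<in> {R. R \<subseteq> U \<and> card R = card U - r}" using fin by (auto simp: card_Diff_subset finite_subset)
  next
    fix R' assume R': "R' \<in> {R. R \<subseteq> U \<and> card R = card U - r}"
    hence "R' = U - (U - R')" "U - R' \<subseteq> U" by auto
    moreover have "card (U - R') = r" using R' fin r by (auto simp: card_Diff_subset finite_subset)
    ultimately show "R' \<in> (\<lambda>R. U - R) ` ?A" by blast
  qed
  have "kraw U a (card U - r) = (\<Sum>R\<in>?A. (-1::int)^card ((U - R) \<inter> a))"
    unfolding kraw_def img[symmetric] by (simp add: sum.reindex[OF inj])
  also have "\<dots> = (\<Sum>R\<in>?A. (-1)^card a * (-1)^card (R \<inter> a))"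
  proof (rule sum.cong[OF refl])
    fix R assume R: "R \<in> ?A"
    have "(U - R) \<inter> a = a - (R \<inter> a)" using a by blast
    hence "card ((U - R) \<inter> a) = card a - card (R \<inter> a)"
      using a fin by (simp add: card_Diff_subset finite_subset)
    moreover have "card (R \<inter> a) \<le> card a" using a fin by (simp add: card_mono finite_subset)
    ultimately show "(-1::int)^card ((U - R) \<inter> a) = (-1)^card a * (-1)^card (R \<inter> a)"
      by (simp add: minus_one_power_diff)
  qed
  also have "\<dots> = (-1)^card a * kraw U a r" unfolding kraw_def by (simp add: sum_distrib_left)
  finally show ?thesis .
qed

lemma pascal_bound_step:
  fixes m r' :: nat and X Y K B C1 C0 :: int
  assumes m: "m > 0"
    and K: "\<bar>K\<bar> \<le> \<bar>X\<bar> + \<bar>Y\<bar>"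
    and hX: "int m * \<bar>X\<bar> \<le> (int m - 2*int r' - 2) * C1"
    and hY: "int m * \<bar>Y\<bar> \<le> (int m - 2*int r') * C0"
    and I1: "(int m + 1) * C1 = (int m - int r') * B"
    and I2: "(int m + 1) * C0 = (int r' + 1) * B"
  shows "(int m + 1) * \<bar>K\<bar> \<le> (int m + 1 - 2*(int r' + 1)) * B"
proof -
  have p: "int m * (int m + 1) \<ge> 0" by simp
  have "int m * ((int m + 1) * \<bar>K\<bar>) = (int m * (int m + 1)) * \<bar>K\<bar>" by (simp add: algebra_simps)
  also have "\<dots> \<le> (int m * (int m + 1)) * (\<bar>X\<bar> + \<bar>Y\<bar>)" by (rule mult_left_mono[OF K p])
  also have "\<dots> = (int m + 1) * (int m * \<bar>X\<bar>) + (int m + 1) * (int m * \<bar>Y\<bar>)" by (simp add: algebra_simps)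
  also have "\<dots> \<le> (int m + 1) * ((int m - 2*int r' - 2) * C1) + (int m + 1) * ((int m - 2*int r') * C0)"
    by (intro add_mono mult_left_mono hX hY) auto
  also have "\<dots> = (int m - 2*int r' - 2) * ((int m + 1) * C1) + (int m - 2*int r') * ((int m + 1) * C0)"
    by (simp add: algebra_simps)
  also have "\<dots> = int m * ((int m + 1 - 2*(int r' + 1)) * B)"
    unfolding I1 I2 by (simp add: algebra_simps)
  finally show ?thesis using m by simp
qed

lemma pascal_bound_step_strict:
  fixes m r' :: nat and X Y K B C1 C0 :: int
  assumes m: "m > 0"
    and K: "\<bar>K\<bar> \<le> \<bar>X\<bar> + \<bar>Y\<bar>"
    and hX: "int m * \<bar>X\<bar> \<le> (int m - 2*int r' - 2) * C1"
    and hY: "int m * \<bar>Y\<bar> < (int m - 2*int r') * C0"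
    and I1: "(int m + 1) * C1 = (int m - int r') * B"
    and I2: "(int m + 1) * C0 = (int r' + 1) * B"
  shows "(int m + 1) * \<bar>K\<bar> < (int m + 1 - 2*(int r' + 1)) * B"
proof -
  have p: "int m * (int m + 1) \<ge> 0" by simp
  have "int m * ((int m + 1) * \<bar>K\<bar>) = (int m * (int m + 1)) * \<bar>K\<bar>" by (simp add: algebra_simps)
  also have "\<dots> \<le> (int m * (int m + 1)) * (\<bar>X\<bar> + \<bar>Y\<bar>)" by (rule mult_left_mono[OF K p])
  also have "\<dots> = (int m + 1) * (int m * \<bar>X\<bar>) + (int m + 1) * (int m * \<bar>Y\<bar>)" by (simp add: algebra_simps)
  also have "\<dots> < (int m + 1) * ((int m - 2*int r' - 2) * C1) + (int m + 1) * ((int m - 2*int r') * C0)"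
    by (intro add_le_less_mono mult_left_mono hX mult_strict_left_mono hY) auto
  also have "\<dots> = (int m - 2*int r' - 2) * ((int m + 1) * C1) + (int m - 2*int r') * ((int m + 1) * C0)"
    by (simp add: algebra_simps)
  also have "\<dots> = int m * ((int m + 1 - 2*(int r' + 1)) * B)"
    unfolding I1 I2 by (simp add: algebra_simps)
  finally show ?thesis using m by simp
qed

lemma int_binomial_Suc_diff: "(int m + 1) * int (m choose Suc r') = (int m - int r') * int (Suc m choose Suc r')"
proof -
  have e: "(Suc m - Suc r') * (Suc m choose Suc r') = Suc m * (m choose Suc r')"
    by (metis binomial_absorb_comp diff_Suc_1)
  hence e2: "int (Suc m - Suc r') * int (Suc m choose Suc r') = int (Suc m) * int (m choose Suc r')"
    by (metis of_nat_mult)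
  show ?thesis
  proof (cases "r' \<le> m")
    case True
    hence "int (Suc m - Suc r') = int m - int r'" by simp
    thus ?thesis using e2 by (simp del: binomial_Suc_Suc)
  next
    case False
    hence z1: "(m choose Suc r') = 0" and z2: "(Suc m choose Suc r') = 0" by (simp_all del: binomial_Suc_Suc)
    show ?thesis by (simp only: z1 z2 of_nat_0 mult_zero_right)
  qed
qed

lemma int_binomial_Suc_Suc: "(int m + 1) * int (m choose r') = (int r' + 1) * int (Suc m choose Suc r')"
proof -
  have "int (Suc m * (m choose r')) = int ((Suc m choose Suc r') * Suc r')"
    using Suc_times_binomial_eq[of m r'] by simp
  thus ?thesis by (simp add: of_nat_mult algebra_simps)
qed

text \<open>When \<open>card U = 2r + 3\<close>, complement symmetry gives \<open>kraw U a (r + 2) = \<plusminus>kraw U a (r + 1)\<close>;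
  with the recurrence at a point \<open>p\<close> chosen by the parity of \<open>card a\<close>, this forces
  \<open>kraw (U - {p}) (a - {p}) (r + 1) = 0\<close>.\<close>

lemma kraw_middle:
  assumes fU: "finite U" and cU: "card U = 2 * Suc r + 1" and aU: "a \<subseteq> U"
    and p: "p \<in> U" and pa: "p \<in> a \<longleftrightarrow> even (card a)"
  shows "\<bar>kraw U a (Suc r)\<bar> = \<bar>kraw (U - {p}) (a - {p}) r\<bar>"
proof -
  let ?U' = "U - {p}" and ?a' = "a - {p}"
  define w where "w = card a"
  have fa: "finite a" using aU fU finite_subset by blast
  have fU': "finite ?U'" and cU': "card ?U' = 2 * Suc r" and aU': "?a' \<subseteq> ?U'"
    using fU cU p aU by auto
  define X where "X = kraw ?U' ?a' (Suc r)"
  define Y where "Y = kraw ?U' ?a' r"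
  define X2 where "X2 = kraw ?U' ?a' (Suc (Suc r))"
  define \<sigma> :: int where "\<sigma> = (if p \<in> a then -1 else 1)"
  have rec1: "kraw U a (Suc r) = X + \<sigma> * Y"
    unfolding X_def Y_def \<sigma>_def by (rule kraw_remove[OF fU p])
  have rec2: "kraw U a (Suc (Suc r)) = X2 + \<sigma> * X"
    unfolding X_def X2_def \<sigma>_def by (rule kraw_remove[OF fU p])
  have c1: "kraw U a (Suc (Suc r)) = (-1)^w * kraw U a (Suc r)"
    using kraw_complement[OF fU aU, of "Suc r"] cU w_def by simp
  have c2: "X2 = (-1)^card ?a' * Y"
    using kraw_complement[OF fU' aU', of r] cU' unfolding X2_def Y_def
    by (simp add: numeral_eq_Suc)
  have wa': "card ?a' = (if p \<in> a then w - 1 else w)" using fa w_def by simp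
  have "X = 0"
  proof (cases "p \<in> a")
    case True
    hence "w \<ge> 1" using fa w_def card_0_eq by fastforce
    hence "even w" "odd (w - 1)" using True pa w_def by auto
    hence "X + - Y = - Y + - X" using c1 rec1 rec2 c2 True wa' \<sigma>_def by simp
    thus "X = 0" by simp
  next
    case False
    hence "odd w" using pa w_def by simp
    hence "- (X + Y) = - Y + X" using c1 rec1 rec2 c2 False wa' \<sigma>_def by simp
    thus "X = 0" by simp
  qed
  thus ?thesis using rec1 \<sigma>_def Y_def by simp
qed


lemma exists_point_remove_card_bounds:
  assumes fU: "finite U" and aU: "a \<subseteq> U" and cU: "card U = Suc m"
    and i: "i \<le> card a" "card a + i \<le> Suc m" "2 * i \<le> m"
  shows "\<exists>p\<in>U. i \<le> card (a - {p}) \<and> card (a - {p}) + i \<le> m"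
proof (cases "card a + i < Suc m")
  case True
  have "a \<noteq> U" using True cU i by auto
  then obtain p where "p \<in> U" "p \<notin> a" using aU by blast
  thus ?thesis using True i by (intro bexI[of _ p]) auto
next
  case False
  hence "a \<noteq> {}" using i by auto
  then obtain p where p: "p \<in> a" by blast
  hence "card (a - {p}) = card a - 1" using aU fU finite_subset by (metis card_Diff_singleton)
  thus ?thesis using False i p aU by (intro bexI[of _ p]) auto
qed

lemma kraw_bound:
  "finite U \<Longrightarrow> card U = n \<Longrightarrow> a \<subseteq> U \<Longrightarrow> 2*r < n \<Longrightarrow>
   1 \<le> card a \<Longrightarrow> card a < n \<Longrightarrow>
   int n * \<bar>kraw U a r\<bar> \<le> (int n - 2*int r) * int (n choose r)"
proof (induction n arbitrary: U a r)
  case 0 thus ?case by simp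
next
  case (Suc m)
  show ?case
  proof (cases r)
    case 0 thus ?thesis using Suc.prems by (simp add: kraw_0)
  next
    case (Suc r')
    note r = this
    have fU: "finite U" and cU: "card U = Suc m" and aU: "a \<subseteq> U" using Suc.prems by auto
    have fa: "finite a" using aU fU finite_subset by blast
    define w where "w = card a"
    have w1: "1 \<le> w" "w < Suc m" using Suc.prems w_def by auto
    let ?B = "int (Suc m choose Suc r')"
    show ?thesis
    proof (cases "2 * r + 2 \<le> Suc m")
      case True
      obtain p where p: "p \<in> U" and "1 \<le> card (a - {p})" "card (a - {p}) + 1 \<le> m"
        using exists_point_remove_card_bounds[OF fU aU cU, of 1] w1 w_def True r by auto
      hence ca': "1 \<le> card (a - {p})" "card (a - {p}) < m" by auto
      let ?U' = "U - {p}" and ?a' = "a - {p}"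
      have fU': "finite ?U'" and cU': "card ?U' = m" and aU': "?a' \<subseteq> ?U'" using fU cU p aU by auto
      define X where "X = kraw ?U' ?a' (Suc r')"
      define Y where "Y = kraw ?U' ?a' r'"
      have rec: "kraw U a r = X + (if p \<in> a then -1 else 1) * Y"
        unfolding r X_def Y_def by (rule kraw_remove[OF fU p])
      have K: "\<bar>kraw U a r\<bar> \<le> \<bar>X\<bar> + \<bar>Y\<bar>" unfolding rec by (cases "p \<in> a") auto
      have hX: "int m * \<bar>X\<bar> \<le> (int m - 2*int r' - 2) * int (m choose Suc r')"
        using Suc.IH[of ?U' ?a' "Suc r'", OF fU' cU' aU' _ ca'] True r unfolding X_def by (simp add: algebra_simps)
      have hY: "int m * \<bar>Y\<bar> \<le> (int m - 2*int r') * int (m choose r')"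
        using Suc.IH[of ?U' ?a' "r'", OF fU' cU' aU' _ ca'] True r unfolding Y_def by simp
      have "(int m + 1) * \<bar>kraw U a r\<bar> \<le> (int m + 1 - 2*(int r' + 1)) * ?B"
        by (rule pascal_bound_step[OF _ K hX hY int_binomial_Suc_diff int_binomial_Suc_Suc]) (use True r in simp)
      thus ?thesis using r by (simp del: binomial_Suc_Suc add: ac_simps)
    next
      case False
      hence n: "Suc m = 2 * r + 1" using Suc.prems by simp
      have "\<exists>p\<in>U. (p \<in> a \<longleftrightarrow> even w)"
      proof (cases "even w")
        case True
        have "a \<noteq> {}" using w1 w_def by auto
        thus ?thesis using True aU by blast
      next
        case False
        have "a \<subset> U" using aU w1 cU w_def by auto
        thus ?thesis using False by blast
      qed
      then obtain p where p: "p \<in> U" and pa: "p \<in> a \<longleftrightarrow> even w" by blast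
      let ?U' = "U - {p}" and ?a' = "a - {p}"
      have fU': "finite ?U'" and cU': "card ?U' = m" and aU': "?a' \<subseteq> ?U'" using fU cU p aU by auto
      define Y where "Y = kraw ?U' ?a' r'"
      have KY: "\<bar>kraw U a r\<bar> = \<bar>Y\<bar>"
        unfolding r Y_def by (rule kraw_middle[OF fU _ aU p]) (use cU n r pa w_def in auto)
      have wa': "card ?a' = (if p \<in> a then w - 1 else w)" using fa w_def by simp
      have ca': "1 \<le> card ?a'" "card ?a' < m"
      proof -
        show "1 \<le> card ?a'"
        proof (cases "p \<in> a")
          case True thus ?thesis using wa' pa w1 by (cases "w = 1") auto
        next
          case False thus ?thesis using wa' w1 by simp
        qed
        show "card ?a' < m"
        proof (cases "p \<in> a")
          case True thus ?thesis using wa' w1 by simp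
        next
          case False
          hence "odd w" using pa by simp
          hence "w \<noteq> m" using n by auto
          thus ?thesis using False wa' w1 by simp
        qed
      qed
      have hY: "int m * \<bar>Y\<bar> \<le> (int m - 2*int r') * int (m choose r')"
        using Suc.IH[of ?U' ?a' "r'", OF fU' cU' aU' _ ca'] n r unfolding Y_def by simp
      hence "int m * \<bar>Y\<bar> \<le> 2 * int (m choose r')" using n r by simp
      hence "2 * ((int r' + 1) * \<bar>Y\<bar>) \<le> 2 * int (m choose r')" using n r by (simp add: algebra_simps)
      hence h2: "(int r' + 1) * \<bar>Y\<bar> \<le> int (m choose r')" by linarith
      have "(int r' + 1) * ((int m + 1) * \<bar>Y\<bar>) = (int m + 1) * ((int r' + 1) * \<bar>Y\<bar>)"
        by (simp add: algebra_simps)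
      also have "\<dots> \<le> (int m + 1) * int (m choose r')" by (rule mult_left_mono[OF h2]) simp
      also have "\<dots> = (int r' + 1) * ?B" by (rule int_binomial_Suc_Suc)
      finally have "(int m + 1) * \<bar>Y\<bar> \<le> ?B" by simp
      thus ?thesis using KY n r by simp
    qed
  qed
qed

lemma kraw_bound_strict:
  "finite U \<Longrightarrow> card U = n \<Longrightarrow> a \<subseteq> U \<Longrightarrow> 1 \<le> r \<Longrightarrow> 2*r + 2 \<le> n \<Longrightarrow>
   2 \<le> card a \<Longrightarrow> card a + 2 \<le> n \<Longrightarrow>
   int n * \<bar>kraw U a r\<bar> < (int n - 2*int r) * int (n choose r)"
proof (induction n arbitrary: U a r)
  case 0 thus ?case by simp
next
  case (Suc m)
  obtain r' where r: "r = Suc r'" using Suc.prems by (cases r) auto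
  have fU: "finite U" and cU: "card U = Suc m" and aU: "a \<subseteq> U" using Suc.prems by auto
  have fa: "finite a" using aU fU finite_subset by blast
  define w where "w = card a"
  have w1: "2 \<le> w" "w + 2 \<le> Suc m" using Suc.prems w_def by auto
  show ?case
  proof (cases "r' = 0")
    case True
    hence "kraw U a r = int (Suc m) - 2 * int w" using kraw_1[OF fU aU] r cU w_def by simp
    moreover have "\<bar>int (Suc m) - 2 * int w\<bar> < int (Suc m) - 2" using w1 by linarith
    ultimately have "\<bar>kraw U a r\<bar> < int (Suc m) - 2" by simp
    hence "int (Suc m) * \<bar>kraw U a r\<bar> < int (Suc m) * (int (Suc m) - 2)"
      by (intro mult_strict_left_mono) auto
    thus ?thesis using True r by (simp add: ac_simps)
  next
    case False
    let ?B = "int (Suc m choose Suc r')"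
    obtain p where p: "p \<in> U" and ca': "2 \<le> card (a - {p})" "card (a - {p}) + 2 \<le> m"
      using exists_point_remove_card_bounds[OF fU aU cU, of 2] w1 w_def Suc.prems r False by auto
    let ?U' = "U - {p}" and ?a' = "a - {p}"
    have fU': "finite ?U'" and cU': "card ?U' = m" and aU': "?a' \<subseteq> ?U'" using fU cU p aU by auto
    define X where "X = kraw ?U' ?a' (Suc r')"
    define Y where "Y = kraw ?U' ?a' r'"
    have rec: "kraw U a r = X + (if p \<in> a then -1 else 1) * Y"
      unfolding r X_def Y_def by (rule kraw_remove[OF fU p])
    have K: "\<bar>kraw U a r\<bar> \<le> \<bar>X\<bar> + \<bar>Y\<bar>" unfolding rec by (cases "p \<in> a") auto
    have hX: "int m * \<bar>X\<bar> \<le> (int m - 2*int r' - 2) * int (m choose Suc r')"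
      using kraw_bound[of ?U' m ?a' "Suc r'", OF fU' cU' aU'] ca' Suc.prems r unfolding X_def by (simp add: algebra_simps)
    have hY: "int m * \<bar>Y\<bar> < (int m - 2*int r') * int (m choose r')"
      using Suc.IH[of ?U' ?a' "r'", OF fU' cU' aU' _ _ ca'] False Suc.prems r unfolding Y_def by simp
    have "(int m + 1) * \<bar>kraw U a r\<bar> < (int m + 1 - 2*(int r' + 1)) * ?B"
      by (rule pascal_bound_step_strict[OF _ K hX hY int_binomial_Suc_diff int_binomial_Suc_Suc]) (use Suc.prems r in simp)
    thus ?thesis using r by (simp del: binomial_Suc_Suc add: ac_simps)
  qed
qed

section \<open>Characters of the even-weight code\<close>

text \<open>A constant rather than the abbreviation \<open>sym_diff\<close> from \<open>Set\<close>, which the simplifier would unfold.\<close>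

definition symd :: "nat set \<Rightarrow> nat set \<Rightarrow> nat set" where
  "symd x y = (x - y) \<union> (y - x)"

lemma symd_empty [simp]: "symd x {} = x" "symd {} x = x" unfolding symd_def by auto

lemma symd_symd: "symd (symd x d) d = x" unfolding symd_def by blast

lemma symd_cancel: "symd x (symd x s) = s" unfolding symd_def by blast

lemma symd_eq_empty_iff: "symd x y = {} \<longleftrightarrow> x = y" unfolding symd_def by blast

lemma symd_symd_eq_empty_iff: "symd (symd x y) t = {} \<longleftrightarrow> y = symd x t" unfolding symd_def by blast

lemma mem_symd: "i \<in> symd A B \<longleftrightarrow> \<not> (i \<in> A \<longleftrightarrow> i \<in> B)" unfolding symd_def by blast

lemma symd_subset: "x \<subseteq> U \<Longrightarrow> y \<subseteq> U \<Longrightarrow> symd x y \<subseteq> U" unfolding symd_def by blast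

lemma symd_symd_singletons_eq_empty_iff:
  assumes "p \<noteq> q"
  shows "symd (symd {j} {l}) {p, q} = {} \<longleftrightarrow> (j = p \<and> l = q) \<or> (j = q \<and> l = p)"
  using assms unfolding symd_def by (auto simp: set_eq_iff)

lemma card_symd:
  assumes "finite x" "finite y"
  shows "card (symd x y) + 2 * card (x \<inter> y) = card x + card y"
proof -
  have d: "(x - y) \<inter> (y - x) = {}" by blast
  have "card (symd x y) = card (x - y) + card (y - x)"
    unfolding symd_def using assms d by (simp add: card_Un_disjoint)
  moreover have "card (x - y) = card x - card (x \<inter> y)" using assms by (simp add: card_Diff_subset_Int)
  moreover have "card (y - x) = card y - card (x \<inter> y)" using assms
    by (simp add: card_Diff_subset_Int Int_commute)
  moreover have "card (x \<inter> y) \<le> card x" "card (x \<inter> y) \<le> card y" using assms by (simp_all add: card_mono)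
  ultimately show ?thesis by simp
qed

lemma card_symd_le: "finite x \<Longrightarrow> finite y \<Longrightarrow> card (symd x y) \<le> card x + card y"
  using card_symd by fastforce

lemma even_symd:
  assumes "finite x" "finite y"
  shows "even (card (symd x y)) \<longleftrightarrow> (even (card x) \<longleftrightarrow> even (card y))"
  using card_symd[OF assms] by (metis even_add even_mult_iff even_numeral)

lemma minus_one_power_card_symd:
  assumes "finite x" "finite y"
  shows "(-1::real)^card (symd x y) = (-1)^card x * (-1)^card y"
proof -
  have "(-1::real)^card (symd x y) = (-1)^(card (symd x y) + 2 * card (x \<inter> y))"
    by (simp add: power_add power_mult)
  also have "\<dots> = (-1)^(card x + card y)" using card_symd[OF assms] by simp
  finally show ?thesis by (simp add: power_add)
qed

lemma hdist_symd: "hdist x y = card (symd x y)" unfolding hdist_def symd_def by simp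

definition chi :: "nat set \<Rightarrow> nat set \<Rightarrow> real" where
  "chi a x = (-1)^card (a \<inter> x)"


lemma chi_empty [simp]: "chi a {} = 1" "chi {} x = 1" unfolding chi_def by simp_all

lemma chi_single: "chi {i} D = (if i \<in> D then -1 else 1)" unfolding chi_def by auto

lemma chi_singleton_square: "chi {i} x * chi {i} x = 1"
  by (simp add: chi_single)

lemma chi_singleton_eq_iff: "chi {i} x = chi {i} y \<longleftrightarrow> (i \<in> x \<longleftrightarrow> i \<in> y)"
  by (simp add: chi_single)

lemma chi_comm: "chi a x = chi x a"
  unfolding chi_def by (simp add: Int_commute)

lemma chi_symd:
  assumes "finite a"
  shows "chi a (symd x y) = chi a x * chi a y"
proof -
  have "a \<inter> symd x y = symd (a \<inter> x) (a \<inter> y)" unfolding symd_def by blast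
  thus ?thesis unfolding chi_def using assms minus_one_power_card_symd[of "a \<inter> x" "a \<inter> y"] by simp
qed

lemma chi_symd_left:
  assumes "finite x"
  shows "chi (symd a b) x = chi a x * chi b x"
  using chi_symd[OF assms] chi_comm by metis

lemma sum_involution_zero:
  fixes f :: "'a \<Rightarrow> 'b::linordered_ab_group_add"
  assumes fin: "finite A" and m: "\<And>x. x \<in> A \<Longrightarrow> \<phi> x \<in> A" and i: "\<And>x. x \<in> A \<Longrightarrow> \<phi> (\<phi> x) = x"
    and neg: "\<And>x. x \<in> A \<Longrightarrow> f (\<phi> x) = - f x"
  shows "sum f A = 0"
proof -
  have b: "bij_betw \<phi> A A" by (rule bij_betw_byWitness[where f'=\<phi>]) (use m i in auto)
  have "sum f A = sum (\<lambda>x. f (\<phi> x)) A" using sum.reindex_bij_betw[OF b, of f] by simp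
  also have "\<dots> = - sum f A" using neg by (simp add: sum_negf)
  finally show ?thesis by simp
qed

lemma H_verts_finite: "finite (H_verts n)"
  unfolding H_verts_def by (rule finite_subset[of _ "Pow {0..<n}"]) auto

lemma empty_in_H_verts: "{} \<in> H_verts n" unfolding H_verts_def by simp

lemma H_verts_symd: "x \<in> H_verts n \<Longrightarrow> y \<in> H_verts n \<Longrightarrow> symd x y \<in> H_verts n"
  unfolding H_verts_def using even_symd symd_subset by (auto intro: finite_subset)

lemma card_Pow_pos: "real (card (Pow {0..<(n::nat)})) > 0"
proof -
  have "finite {0..<n}" by simp
  hence "card (Pow {0..<n}) = 2 ^ card {0..<n}" by (rule card_Pow)
  thus ?thesis by simp
qed

lemma sum_chi_H_verts:
  assumes c: "c \<subseteq> {0..<n}" "c \<noteq> {}" "c \<noteq> {0..<n}"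
  shows "(\<Sum>x\<in>H_verts n. chi c x) = 0"
proof -
  obtain i where i: "i \<in> c" using c by blast
  obtain j where j: "j \<in> {0..<n}" "j \<notin> c" using c by blast
  have ij: "i \<noteq> j" using i j by blast
  have d: "{i, j} \<in> H_verts n" using i j c ij unfolding H_verts_def by auto
  have fc: "finite c" using c finite_subset by blast
  have "c \<inter> {i,j} = {i}" using i j by blast
  hence cij: "chi c {i,j} = -1" unfolding chi_def by simp
  show ?thesis
  proof (rule sum_involution_zero[where \<phi>="\<lambda>x. symd x {i,j}"])
    show "finite (H_verts n)" by (rule H_verts_finite)
    fix x assume x: "x \<in> H_verts n"
    show "symd x {i, j} \<in> H_verts n" by (rule H_verts_symd[OF x d])
    show "symd (symd x {i, j}) {i, j} = x" by (rule symd_symd)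
    show "chi c (symd x {i, j}) = - chi c x" using chi_symd[OF fc] cij by simp
  qed
qed

lemma sum_chi_Pow_eq_0:
  assumes c: "c \<subseteq> {0..<n}" "c \<noteq> {}"
  shows "(\<Sum>a\<in>Pow {0..<n}. chi a c) = 0"
proof -
  obtain i where i: "i \<in> c" using c by blast
  have fc: "finite c" using c finite_subset by blast
  have ci: "chi {i} c = -1" using i unfolding chi_def by simp
  show ?thesis
  proof (rule sum_involution_zero[where \<phi>="\<lambda>a. symd a {i}"])
    show "finite (Pow {0..<n})" by simp
    fix a assume a: "a \<in> Pow {0..<n}"
    show "symd a {i} \<in> Pow {0..<n}" using a i c unfolding symd_def by auto
    show "symd (symd a {i}) {i} = a" by (rule symd_symd)
    show "chi (symd a {i}) c = - chi a c" using chi_symd_left[OF fc] ci by simp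
  qed
qed

lemma sum_chi_Pow:
  assumes c: "c \<subseteq> {0..<n}"
  shows "(\<Sum>a\<in>Pow {0..<n}. chi a c) = (if c = {} then real (card (Pow {0..<n})) else 0)"
  using sum_chi_Pow_eq_0[OF c] by auto

definition fourier :: "nat \<Rightarrow> (nat set \<Rightarrow> real) \<Rightarrow> nat set \<Rightarrow> real" where
  "fourier n g a = (\<Sum>x\<in>H_verts n. g x * chi a x)"

lemma fourier_inversion:
  assumes x: "x \<in> H_verts n"
  shows "(\<Sum>a\<in>Pow {0..<n}. fourier n g a * chi a x) = real (card (Pow {0..<n})) * g x"
proof -
  let ?V = "H_verts n" and ?P = "Pow {0..<n}" and ?N = "real (card (Pow {0..<n}))"
  have fV: "finite ?V" by (rule H_verts_finite)
  have Vsub: "\<And>x. x \<in> ?V \<Longrightarrow> x \<subseteq> {0..<n}" unfolding H_verts_def by auto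
  have "(\<Sum>a\<in>?P. fourier n g a * chi a x) = (\<Sum>a\<in>?P. \<Sum>y\<in>?V. g y * chi a (symd y x))"
  proof (rule sum.cong[OF refl])
    fix a assume a: "a \<in> ?P"
    have fa: "finite a" using a finite_subset by auto
    show "fourier n g a * chi a x = (\<Sum>y\<in>?V. g y * chi a (symd y x))"
      unfolding fourier_def sum_distrib_right by (simp add: chi_symd[OF fa] mult_ac)
  qed
  also have "\<dots> = (\<Sum>y\<in>?V. \<Sum>a\<in>?P. g y * chi a (symd y x))" by (rule sum.swap)
  also have "\<dots> = (\<Sum>y\<in>?V. g y * (if y = x then ?N else 0))"
  proof (rule sum.cong[OF refl])
    fix y assume y: "y \<in> ?V"
    have "symd y x \<subseteq> {0..<n}" using x y Vsub symd_subset by blast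
    moreover have "symd y x = {} \<longleftrightarrow> y = x" by (rule symd_eq_empty_iff)
    ultimately show "(\<Sum>a\<in>?P. g y * chi a (symd y x)) = g y * (if y = x then ?N else 0)"
      using sum_chi_Pow[of "symd y x" n] by (simp add: sum_distrib_left[symmetric])
  qed
  also have "\<dots> = ?N * g x" using x fV by (simp add: if_distrib sum.delta' cong: if_cong)
  finally show ?thesis .
qed

text \<open>The quadratic form \<open>g\<^sup>T A g\<close> of the adjacency matrix \<open>A\<close> of the Cayley graph on \<open>H_verts n\<close>
  with connection set \<open>T\<close>.\<close>

definition cayley_form :: "nat \<Rightarrow> nat set set \<Rightarrow> (nat set \<Rightarrow> real) \<Rightarrow> real" where
  "cayley_form n T g = (\<Sum>x\<in>H_verts n. \<Sum>t\<in>T. g x * g (symd x t))"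

lemma fourier_sq_mult_sum_chi:
  assumes fa: "finite a"
  shows "(fourier n g a)^2 * (\<Sum>t\<in>T. chi a t)
       = (\<Sum>x\<in>H_verts n. \<Sum>y\<in>H_verts n. \<Sum>t\<in>T. g x * g y * chi a (symd (symd x y) t))"
proof -
  let ?V = "H_verts n"
  have "(fourier n g a)^2 = (\<Sum>x\<in>?V. \<Sum>y\<in>?V. (g x * chi a x) * (g y * chi a y))"
    unfolding fourier_def power2_eq_square sum_product by simp
  hence "(fourier n g a)^2 * (\<Sum>t\<in>T. chi a t)
      = (\<Sum>x\<in>?V. \<Sum>y\<in>?V. (g x * chi a x) * (g y * chi a y) * (\<Sum>t\<in>T. chi a t))"
    by (simp add: sum_distrib_right)
  also have "\<dots> = (\<Sum>x\<in>?V. \<Sum>y\<in>?V. \<Sum>t\<in>T. (g x * chi a x) * (g y * chi a y) * chi a t)"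
    by (simp add: sum_distrib_left)
  also have "\<dots> = (\<Sum>x\<in>?V. \<Sum>y\<in>?V. \<Sum>t\<in>T. g x * g y * chi a (symd (symd x y) t))"
    by (simp add: chi_symd[OF fa] mult_ac)
  finally show ?thesis .
qed

lemma parseval_cayley:
  assumes T: "T \<subseteq> H_verts n"
  shows "(\<Sum>a\<in>Pow {0..<n}. (fourier n g a)^2 * (\<Sum>t\<in>T. chi a t))
       = real (card (Pow {0..<n})) * cayley_form n T g"
proof -
  let ?V = "H_verts n" and ?P = "Pow {0..<n}" and ?N = "real (card (Pow {0..<n}))"
  have fV: "finite ?V" by (rule H_verts_finite)
  have Vsub: "\<And>x. x \<in> ?V \<Longrightarrow> x \<subseteq> {0..<n}" unfolding H_verts_def by auto
  have "(\<Sum>a\<in>?P. (fourier n g a)^2 * (\<Sum>t\<in>T. chi a t))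
      = (\<Sum>a\<in>?P. \<Sum>x\<in>?V. \<Sum>y\<in>?V. \<Sum>t\<in>T. g x * g y * chi a (symd (symd x y) t))"
    by (rule sum.cong[OF refl]) (auto intro: fourier_sq_mult_sum_chi finite_subset)
  also have "\<dots> = (\<Sum>x\<in>?V. \<Sum>y\<in>?V. \<Sum>t\<in>T. \<Sum>a\<in>?P. g x * g y * chi a (symd (symd x y) t))"
    by (subst sum.swap, rule sum.cong[OF refl], subst sum.swap, rule sum.cong[OF refl], subst sum.swap, rule refl)
  also have "\<dots> = (\<Sum>x\<in>?V. \<Sum>y\<in>?V. \<Sum>t\<in>T. g x * g y * (if y = symd x t then ?N else 0))"
  proof (intro sum.cong[OF refl])
    fix x y t assume x: "x \<in> ?V" and y: "y \<in> ?V" and t: "t \<in> T"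
    have "symd (symd x y) t \<subseteq> {0..<n}" using x y t T Vsub by (meson symd_subset subsetD)
    hence "(\<Sum>a\<in>?P. chi a (symd (symd x y) t)) = (if y = symd x t then ?N else 0)"
      using sum_chi_Pow symd_symd_eq_empty_iff by presburger
    thus "(\<Sum>a\<in>?P. g x * g y * chi a (symd (symd x y) t)) = g x * g y * (if y = symd x t then ?N else 0)"
      by (simp add: sum_distrib_left[symmetric])
  qed
  also have "\<dots> = (\<Sum>x\<in>?V. \<Sum>t\<in>T. \<Sum>y\<in>?V. g x * g y * (if y = symd x t then ?N else 0))"
    by (rule sum.cong[OF refl], rule sum.swap)
  also have "\<dots> = (\<Sum>x\<in>?V. \<Sum>t\<in>T. ?N * (g x * g (symd x t)))"
  proof (intro sum.cong[OF refl])
    fix x t assume x: "x \<in> ?V" and t: "t \<in> T"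
    have "symd x t \<in> ?V" using H_verts_symd x t T by blast
    thus "(\<Sum>y\<in>?V. g x * g y * (if y = symd x t then ?N else 0)) = ?N * (g x * g (symd x t))"
      using fV by (simp add: if_distrib[of "\<lambda>z. g x * g _ * z"] sum.delta' cong: if_cong)
  qed
  also have "\<dots> = ?N * (\<Sum>x\<in>?V. \<Sum>t\<in>T. g x * g (symd x t))"
    by (simp add: sum_distrib_left)
  finally show ?thesis unfolding cayley_form_def .
qed

lemma cayley_form_spectral_decomposition:
  assumes T: "T \<subseteq> H_verts n"
  shows "real (card (Pow {0..<n})) * (cayley_form n T g - lam * (\<Sum>x\<in>H_verts n. g x * g x))
       = (\<Sum>a\<in>Pow {0..<n}. (fourier n g a)^2 * ((\<Sum>t\<in>T. chi a t) - lam))"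
proof -
  let ?P = "Pow {0..<n}" and ?N = "real (card (Pow {0..<n}))"
  have plancherel: "(\<Sum>a\<in>?P. (fourier n g a)^2) = ?N * (\<Sum>x\<in>H_verts n. g x * g x)"
    using parseval_cayley[of "{{}}" n g] by (simp add: empty_in_H_verts cayley_form_def)
  have "(\<Sum>a\<in>?P. (fourier n g a)^2 * ((\<Sum>t\<in>T. chi a t) - lam))
      = (\<Sum>a\<in>?P. (fourier n g a)^2 * (\<Sum>t\<in>T. chi a t)) - (\<Sum>a\<in>?P. (fourier n g a)^2) * lam"
    by (simp only: right_diff_distrib sum_subtractf sum_distrib_right)
  also have "\<dots> = ?N * (cayley_form n T g - lam * (\<Sum>x\<in>H_verts n. g x * g x))"
    unfolding parseval_cayley[OF T] plancherel by (simp add: algebra_simps)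
  finally show ?thesis ..
qed

lemma cayley_form_ge:
  assumes T: "T \<subseteq> H_verts n"
    and lam: "\<And>a. a \<in> Pow {0..<n} \<Longrightarrow> lam \<le> (\<Sum>t\<in>T. chi a t)"
  shows "lam * (\<Sum>x\<in>H_verts n. g x * g x) \<le> cayley_form n T g"
proof -
  have "0 \<le> real (card (Pow {0..<n})) * (cayley_form n T g - lam * (\<Sum>x\<in>H_verts n. g x * g x))"
    unfolding cayley_form_spectral_decomposition[OF T] using lam by (intro sum_nonneg) simp
  thus ?thesis using card_Pow_pos[of n] by (auto simp: zero_le_mult_iff)
qed

lemma fourier_eq_0_if_cayley_form_eq:
  assumes T: "T \<subseteq> H_verts n"
    and lam: "\<And>a. a \<in> Pow {0..<n} \<Longrightarrow> lam \<le> (\<Sum>t\<in>T. chi a t)"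
    and eq: "cayley_form n T g = lam * (\<Sum>x\<in>H_verts n. g x * g x)"
    and a: "a \<in> Pow {0..<n}" and lt: "lam < (\<Sum>t\<in>T. chi a t)"
  shows "fourier n g a = 0"
proof -
  have nonneg: "\<And>a. a \<in> Pow {0..<n} \<Longrightarrow> 0 \<le> (fourier n g a)^2 * ((\<Sum>t\<in>T. chi a t) - lam)"
    using lam by simp
  have "(\<Sum>a\<in>Pow {0..<n}. (fourier n g a)^2 * ((\<Sum>t\<in>T. chi a t) - lam)) = 0"
    using cayley_form_spectral_decomposition[OF T, of g lam] eq by simp
  hence "(fourier n g a)^2 * ((\<Sum>t\<in>T. chi a t) - lam) = 0"
    using sum_nonneg_eq_0_iff[of "Pow {0..<n}", OF _ nonneg] a by simp
  thus ?thesis using lt by simp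
qed

section \<open>The least eigenvalue of \<open>H\<^sub>n\<^sub>,\<^sub>k\<close>\<close>

lemma kraw_lower_bound:
  assumes fU: "finite U" and cU: "card U = n" and aU: "a \<subseteq> U"
    and k: "even k" "n + 2 \<le> 2 * k" "k \<le> n - 1"
  shows "int (n choose k) * (int n - 2 * int k) \<le> int n * kraw U a k"
    and "card a \<noteq> 1 \<Longrightarrow> card a \<noteq> n - 1 \<Longrightarrow>
         int (n choose k) * (int n - 2 * int k) < int n * kraw U a k"
proof -
  define r where "r = n - k"
  define C where "C = n choose k"
  have kr: "k = n - r" "r \<le> n" and r1: "1 \<le> r" "2 * r + 2 \<le> n" using k r_def by auto
  have Cr: "n choose r = C" using kr binomial_symmetric C_def by metis
  have fa: "finite a" using aU fU finite_subset by blast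
  have "int C * (int n - 2 * int k) \<le> int n * kraw U a k \<and>
      (card a \<noteq> 1 \<longrightarrow> card a \<noteq> n - 1 \<longrightarrow> int C * (int n - 2 * int k) < int n * kraw U a k)"
  proof (cases "card a = 0 \<or> card a = n")
    case True
    have "kraw U a k = int C"
    proof (cases "card a = 0")
      case True
      hence "a = {}" using fa by simp
      thus ?thesis using kraw_empty[OF fU] cU C_def by simp
    next
      case False
      hence "a = U" using True aU fU cU by (metis card_subset_eq)
      have "kraw U a k = (\<Sum>R\<in>{R. R \<subseteq> U \<and> card R = k}. 1)"
        unfolding kraw_def by (rule sum.cong[OF refl]) (use \<open>a = U\<close> k in \<open>auto simp: Int_absorb2\<close>)
      thus ?thesis using n_subsets[OF fU, of k] cU C_def by simp
    qed
    moreover have "C > 0" using k C_def by simp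
    ultimately show ?thesis using k by simp
  next
    case False
    have w: "1 \<le> card a" "card a < n" using False card_mono[OF fU aU] cU by auto
    have "\<bar>kraw U a k\<bar> = \<bar>kraw U a r\<bar>"
      using kraw_complement[OF fU aU, of r] cU kr by (simp add: abs_mult)
    moreover have "int n * \<bar>kraw U a r\<bar> \<le> (int n - 2 * int r) * int C"
      using kraw_bound[OF fU cU aU _ w, of r] r1 Cr by simp
    moreover have "card a \<noteq> 1 \<Longrightarrow> card a \<noteq> n - 1 \<Longrightarrow>
        int n * \<bar>kraw U a r\<bar> < (int n - 2 * int r) * int C"
      using kraw_bound_strict[OF fU cU aU r1] w Cr by simp
    moreover have "- (int n * \<bar>kraw U a k\<bar>) \<le> int n * kraw U a k" by (simp add: abs_if)
    moreover have "int n - 2 * int r = - (int n - 2 * int k)" using kr by simp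
    ultimately show ?thesis by (smt (verit) mult.commute mult_minus_left)
  qed
  thus "int (n choose k) * (int n - 2 * int k) \<le> int n * kraw U a k"
    and "card a \<noteq> 1 \<Longrightarrow> card a \<noteq> n - 1 \<Longrightarrow>
         int (n choose k) * (int n - 2 * int k) < int n * kraw U a k"
    unfolding C_def by blast+
qed

definition slice :: "nat \<Rightarrow> nat \<Rightarrow> nat set set" where
  "slice n k = {s. s \<subseteq> {0..<n} \<and> card s = k}"

lemma card_slice: "card (slice n k) = n choose k"
  unfolding slice_def using n_subsets[of "{0..<n}" k] by simp

lemma slice_subset_H_verts: "even k \<Longrightarrow> slice n k \<subseteq> H_verts n"
  unfolding slice_def H_verts_def by auto

lemma sum_chi_slice: "(\<Sum>t\<in>slice n k. chi a t) = real_of_int (kraw {0..<n} a k)"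
proof -
  have "\<And>t. chi a t = real_of_int ((-1)^card (t \<inter> a))"
    unfolding chi_def by (metis Int_commute of_int_1 of_int_minus of_int_power)
  thus ?thesis unfolding kraw_def slice_def by (simp add: of_int_sum)
qed

definition min_eigenvalue :: "nat \<Rightarrow> nat \<Rightarrow> real" where
  "min_eigenvalue n k = real (n choose k) * (real n - 2 * real k) / real n"

lemma min_eigenvalue_le_sum_chi_slice:
  assumes "a \<subseteq> {0..<n}" and "even k" "n + 2 \<le> 2 * k" "k \<le> n - 1"
  shows "min_eigenvalue n k \<le> (\<Sum>t\<in>slice n k. chi a t)"
proof -
  have "real_of_int (int (n choose k) * (int n - 2 * int k)) \<le> real_of_int (int n * kraw {0..<n} a k)"
    unfolding of_int_le_iff by (rule kraw_lower_bound(1)) (use assms in auto)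
  moreover have "real n > 0" using assms by simp
  ultimately show ?thesis
    unfolding min_eigenvalue_def sum_chi_slice by (simp add: pos_divide_le_eq mult.commute)
qed

lemma min_eigenvalue_less_sum_chi_slice:
  assumes "a \<subseteq> {0..<n}" and "even k" "n + 2 \<le> 2 * k" "k \<le> n - 1"
    and "card a \<noteq> 1" "card a \<noteq> n - 1"
  shows "min_eigenvalue n k < (\<Sum>t\<in>slice n k. chi a t)"
proof -
  have "real_of_int (int (n choose k) * (int n - 2 * int k)) < real_of_int (int n * kraw {0..<n} a k)"
    unfolding of_int_less_iff by (rule kraw_lower_bound(2)) (use assms in auto)
  moreover have "real n > 0" using assms by simp
  ultimately show ?thesis
    unfolding min_eigenvalue_def sum_chi_slice by (simp add: pos_divide_less_eq mult.commute)
qed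

section \<open>Boolean functions of degree one\<close>

lemma sum_chi_single:
  assumes D: "D \<subseteq> {0..<n}"
  shows "(\<Sum>i\<in>{0..<n}. chi {i} D) = real n - 2 * real (card D)"
proof -
  have "(\<Sum>i\<in>{0..<n}. chi {i} D) = (\<Sum>i\<in>{0..<n}. if i \<in> D then -1 else 1)"
    by (simp add: chi_single)
  also have "\<dots> = - real (card ({0..<n} \<inter> D)) + real (card ({0..<n} - D))"
    by (simp add: sum.If_cases Diff_eq)
  also have "\<dots> = real n - 2 * real (card D)"
  proof -
    have "{0..<n} \<inter> D = D" using D by blast
    moreover have "card ({0..<n} - D) = n - card D" using D by (simp add: card_Diff_subset finite_subset)
    moreover have "card D \<le> n" using D by (metis card_atLeastLessThan card_mono finite_atLeastLessThan diff_zero)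
    ultimately show ?thesis by (simp add: of_nat_diff)
  qed
  finally show ?thesis .
qed

lemma chi_complement_singleton:
  assumes x: "x \<in> H_verts n" and j: "j < n"
  shows "chi ({0..<n} - {j}) x = chi {j} x"
proof -
  have xs: "x \<subseteq> {0..<n}" and ev: "even (card x)" using x unfolding H_verts_def by auto
  have fx: "finite x" using xs finite_subset by blast
  have "({0..<n} - {j}) \<inter> x = x - {j}" using xs by blast
  hence "chi ({0..<n} - {j}) x = (-1)^card (x - {j})" unfolding chi_def by simp
  also have "\<dots> = (if j \<in> x then -1 else 1)"
  proof (cases "j \<in> x")
    case True
    hence "card (x - {j}) = card x - 1" using fx by simp
    moreover have "card x \<ge> 1" using True fx card_0_eq by fastforce
    ultimately have "odd (card (x - {j}))" using ev by simp
    thus ?thesis using True by simp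
  next
    case False thus ?thesis using ev by simp
  qed
  finally show ?thesis by (simp add: chi_single)
qed

lemma subset_card_eq_Diff_singleton:
  assumes fU: "finite U" and aU: "a \<subseteq> U" and ca: "card a = card U - 1" and ne: "U \<noteq> {}"
  shows "\<exists>j\<in>U. a = U - {j}"
proof -
  have "card U > 0" using fU ne by (simp add: card_gt_0_iff)
  hence "a \<noteq> U" using ca by auto
  then obtain j where j: "j \<in> U" "j \<notin> a" using aU by blast
  hence "a \<subseteq> U - {j}" "card a = card (U - {j})" using aU ca fU by auto
  thus ?thesis using j fU card_subset_eq[of "U - {j}" a] by auto
qed

text \<open>On even-weight vectors \<open>chi ({0..<n} - {j}) = chi {j}\<close>, so the levels \<open>1\<close> and \<open>n - 1\<close> merge.\<close>

lemma fourier_expansion_level_one: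
  assumes n3: "n \<ge> 3"
    and z: "\<And>a. a \<in> Pow {0..<n} \<Longrightarrow> card a \<noteq> 1 \<Longrightarrow> card a \<noteq> n - 1 \<Longrightarrow> fourier n g a = 0"
    and x: "x \<in> H_verts n"
  shows "g x = (\<Sum>j\<in>{0..<n}. ((fourier n g {j} + fourier n g ({0..<n} - {j})) / real (card (Pow {0..<n}))) * chi {j} x)"
proof -
  let ?U = "{0..<n}" and ?N = "real (card (Pow {0..<n}))"
  let ?P1 = "(\<lambda>j. {j}) ` ?U" and ?P2 = "(\<lambda>j. ?U - {j}) ` ?U"
  have sub: "?P1 \<union> ?P2 \<subseteq> Pow ?U" by auto
  have out: "\<forall>a\<in>Pow ?U - (?P1 \<union> ?P2). fourier n g a * chi a x = 0"
  proof
    fix a assume a: "a \<in> Pow ?U - (?P1 \<union> ?P2)"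
    have c1: "card a \<noteq> 1"
    proof
      assume "card a = 1"
      then obtain j where "a = {j}" by (auto simp: card_Suc_eq)
      thus False using a by auto
    qed
    have c2: "card a \<noteq> n - 1"
    proof
      assume "card a = n - 1"
      then obtain j where "j \<in> ?U" "a = ?U - {j}"
        using subset_card_eq_Diff_singleton[of ?U a] a n3 by auto
      thus False using a by auto
    qed
    show "fourier n g a * chi a x = 0" using z[OF _ c1 c2] a by auto
  qed
  have disj: "?P1 \<inter> ?P2 = {}"
  proof (rule ccontr)
    assume "?P1 \<inter> ?P2 \<noteq> {}"
    then obtain j j' where "j \<in> ?U" "j' \<in> ?U" "{j} = ?U - {j'}" by blast
    hence "card {j} = card (?U - {j'})" by simp
    thus False using \<open>j' \<in> ?U\<close> n3 by simp
  qed
  have inj1: "inj_on (\<lambda>j. {j}) ?U" by (rule inj_onI) auto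
  have inj2: "inj_on (\<lambda>j. ?U - {j}) ?U"
  proof (rule inj_onI)
    fix j j' assume a: "j \<in> ?U" "j' \<in> ?U" "?U - {j} = ?U - {j'}"
    hence "j \<notin> ?U - {j'}" by blast
    thus "j = j'" using a(1) by blast
  qed
  have "?N * g x = (\<Sum>a\<in>Pow ?U. fourier n g a * chi a x)" using fourier_inversion[OF x] by simp
  also have "\<dots> = (\<Sum>a\<in>?P1 \<union> ?P2. fourier n g a * chi a x)"
    by (rule sum.mono_neutral_right[OF _ sub out]) simp
  also have "\<dots> = (\<Sum>a\<in>?P1. fourier n g a * chi a x) + (\<Sum>a\<in>?P2. fourier n g a * chi a x)"
    by (rule sum.union_disjoint) (use disj in auto)
  also have "\<dots> = (\<Sum>j\<in>?U. fourier n g {j} * chi {j} x) + (\<Sum>j\<in>?U. fourier n g (?U - {j}) * chi (?U - {j}) x)"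
    by (simp add: sum.reindex[OF inj1] sum.reindex[OF inj2])
  also have "\<dots> = (\<Sum>j\<in>?U. (fourier n g {j} + fourier n g (?U - {j})) * chi {j} x)"
    using chi_complement_singleton[OF x] by (simp add: sum.distrib distrib_right)
  finally have eqN: "?N * g x = (\<Sum>j\<in>?U. (fourier n g {j} + fourier n g (?U - {j})) * chi {j} x)" .
  have N0: "?N \<noteq> 0" using card_Pow_pos[of n] by linarith
  have e: "g x = (\<Sum>j\<in>?U. (fourier n g {j} + fourier n g (?U - {j})) * chi {j} x) / ?N"
    unfolding eqN[symmetric] using N0 by (metis nonzero_mult_div_cancel_left)
  show ?thesis unfolding e sum_divide_distrib by (rule sum.cong[OF refl]) simp
qed


lemma sum_sum_delta:
  assumes "finite A" "p \<in> A" "q \<in> A"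
  shows "(\<Sum>j\<in>A. \<Sum>l\<in>A. if j = p \<and> l = q then h j l else (0::real)) = h p q"
proof -
  have "\<And>j. (\<Sum>l\<in>A. if j = p \<and> l = q then h j l else 0) = (if j = p then h j q else 0)"
    using assms by (case_tac "j = p") (simp_all add: sum.delta')
  hence "(\<Sum>j\<in>A. \<Sum>l\<in>A. if j = p \<and> l = q then h j l else 0) = (\<Sum>j\<in>A. if j = p then h j q else 0)"
    by simp
  also have "\<dots> = h p q" using assms by (simp add: sum.delta')
  finally show ?thesis .
qed


lemma sum_chi_symd_singletons_doubleton:
  assumes n5: "n \<ge> 5" and jl: "j < n" "l < n" "p < n" "q < n" "p \<noteq> q"
  shows "(\<Sum>x\<in>H_verts n. chi (symd (symd {j} {l}) {p,q}) x)
       = (if (j = p \<and> l = q) \<or> (j = q \<and> l = p) then real (card (H_verts n)) else 0)"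
proof -
  let ?V = "H_verts n" and ?U = "{0..<n}"
  let ?E = "symd (symd {j} {l}) {p,q}"
  show "(\<Sum>x\<in>?V. chi ?E x) = (if (j = p \<and> l = q) \<or> (j = q \<and> l = p) then real (card ?V) else 0)"
  proof (cases "(j = p \<and> l = q) \<or> (j = q \<and> l = p)")
    case True
    hence "?E = {}" using symd_symd_singletons_eq_empty_iff[OF jl(5), of j l] by (simp only:)
    thus ?thesis using True by simp
  next
    case False
    hence ne: "?E \<noteq> {}" using symd_symd_singletons_eq_empty_iff[OF jl(5), of j l] by (simp only: simp_thms)
    have sub: "?E \<subseteq> ?U" using jl by (intro symd_subset) auto
    have "card ?E \<le> card (symd {j} {l}) + card {p,q}" by (rule card_symd_le) (auto simp: symd_def)
    also have "\<dots> \<le> 4" using card_symd_le[of "{j}" "{l}"] jl(5) by simp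
    finally have "?E \<noteq> ?U" using n5 by auto
    thus ?thesis by (subst if_not_P[OF False]) (rule sum_chi_H_verts[OF sub ne])
  qed
qed

text \<open>The coefficient of \<open>chi {p, q}\<close> in \<open>g\<^sup>2 = 1\<close> is \<open>2 c\<^sub>p c\<^sub>q\<close>.\<close>

lemma level_one_boolean_coeff_product:
  fixes g :: "nat set \<Rightarrow> real" and c :: "nat \<Rightarrow> real"
  assumes n5: "n \<ge> 5"
    and sq: "\<And>x. x \<in> H_verts n \<Longrightarrow> g x * g x = 1"
    and ex: "\<And>x. x \<in> H_verts n \<Longrightarrow> g x = (\<Sum>j\<in>{0..<n}. c j * chi {j} x)"
    and pq: "p < n" "q < n" "p \<noteq> q"
  shows "c p * c q = 0"
proof -
  let ?V = "H_verts n" and ?U = "{0..<n}"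
  have fV: "finite ?V" by (rule H_verts_finite)
  have Vsub: "\<And>x. x \<in> ?V \<Longrightarrow> x \<subseteq> ?U" unfolding H_verts_def by auto
  have s0: "(\<Sum>x\<in>?V. g x * g x * chi {p,q} x) = 0"
  proof -
    have "(\<Sum>x\<in>?V. g x * g x * chi {p,q} x) = (\<Sum>x\<in>?V. chi {p,q} x)" using sq by simp
    also have "\<dots> = 0"
    proof (rule sum_chi_H_verts)
      show "{p, q} \<subseteq> ?U" using pq by auto
      show "{p, q} \<noteq> {}" by simp
      show "{p, q} \<noteq> ?U"
      proof
        assume "{p, q} = ?U"
        hence "card ?U = card {p, q}" by simp
        hence "card ?U = 2" using pq by simp
        thus False using n5 by simp
      qed
    qed
    finally show ?thesis .
  qed
  have "(\<Sum>x\<in>?V. g x * g x * chi {p,q} x) = (\<Sum>x\<in>?V. \<Sum>j\<in>?U. \<Sum>l\<in>?U. c j * c l * chi (symd (symd {j} {l}) {p,q}) x)"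
  proof (rule sum.cong[OF refl])
    fix x assume x: "x \<in> ?V"
    have fx: "finite x" using Vsub[OF x] finite_subset by blast
    have "g x * g x * chi {p,q} x = (\<Sum>j\<in>?U. \<Sum>l\<in>?U. (c j * chi {j} x) * (c l * chi {l} x) * chi {p,q} x)"
    proof -
      have "g x * g x = (\<Sum>j\<in>?U. \<Sum>l\<in>?U. (c j * chi {j} x) * (c l * chi {l} x))"
        unfolding ex[OF x] sum_product by simp
      thus ?thesis by (simp add: sum_distrib_right)
    qed
    also have "\<dots> = (\<Sum>j\<in>?U. \<Sum>l\<in>?U. c j * c l * chi (symd (symd {j} {l}) {p,q}) x)"
      by (simp add: chi_symd_left[OF fx] mult_ac)
    finally show "g x * g x * chi {p,q} x = (\<Sum>j\<in>?U. \<Sum>l\<in>?U. c j * c l * chi (symd (symd {j} {l}) {p,q}) x)" .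
  qed
  also have "\<dots> = (\<Sum>j\<in>?U. \<Sum>l\<in>?U. \<Sum>x\<in>?V. c j * c l * chi (symd (symd {j} {l}) {p,q}) x)"
    by (subst sum.swap, rule sum.cong[OF refl], rule sum.swap)
  also have "\<dots> = (\<Sum>j\<in>?U. \<Sum>l\<in>?U. c j * c l * (if (j = p \<and> l = q) \<or> (j = q \<and> l = p) then real (card ?V) else 0))"
    using sum_chi_symd_singletons_doubleton[OF n5] pq by (simp add: sum_distrib_left[symmetric])
  also have "\<dots> = (\<Sum>j\<in>?U. \<Sum>l\<in>?U. (if j = p \<and> l = q then c j * c l * real (card ?V) else 0)
                                    + (if j = q \<and> l = p then c j * c l * real (card ?V) else 0))"
    using pq by (intro sum.cong refl) auto
  also have "\<dots> = c p * c q * real (card ?V) + c q * c p * real (card ?V)"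
    by (simp only: sum.distrib sum_sum_delta[of ?U p q "\<lambda>j l. c j * c l * real (card ?V)"]
         sum_sum_delta[of ?U q p "\<lambda>j l. c j * c l * real (card ?V)"] pq finite_atLeastLessThan atLeastLessThan_iff
         le0 simp_thms)
  finally have "2 * (c p * c q) * real (card ?V) = 0" using s0 by (simp add: algebra_simps)
  moreover have "card ?V > 0" using fV empty_in_H_verts card_gt_0_iff by blast
  ultimately show ?thesis by simp
qed

lemma level_one_boolean_is_dictator:
  fixes g :: "nat set \<Rightarrow> real" and c :: "nat \<Rightarrow> real"
  assumes n5: "n \<ge> 5"
    and sq: "\<And>x. x \<in> H_verts n \<Longrightarrow> g x * g x = 1"
    and ex: "\<And>x. x \<in> H_verts n \<Longrightarrow> g x = (\<Sum>j\<in>{0..<n}. c j * chi {j} x)"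
  shows "\<exists>j0<n. \<forall>x\<in>H_verts n. \<forall>y\<in>H_verts n. (g x = g y \<longleftrightarrow> (j0 \<in> x \<longleftrightarrow> j0 \<in> y))"
proof -
  let ?V = "H_verts n" and ?U = "{0..<n}"
  have "\<exists>j0<n. c j0 \<noteq> 0"
  proof (rule ccontr)
    assume "\<not> (\<exists>j0<n. c j0 \<noteq> 0)"
    hence "g {} = 0" using ex[OF empty_in_H_verts] by simp
    thus False using sq[OF empty_in_H_verts] by simp
  qed
  then obtain j0 where j0: "j0 < n" "c j0 \<noteq> 0" by blast
  have cz: "\<And>j. j \<in> ?U - {j0} \<Longrightarrow> c j = 0"
    using level_one_boolean_coeff_product[OF n5 sq ex] j0
    by (metis DiffE atLeastLessThan_iff insertI1 mult_eq_0_iff)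
  have gx: "\<And>x. x \<in> ?V \<Longrightarrow> g x = c j0 * chi {j0} x"
  proof -
    fix x assume x: "x \<in> ?V"
    have "g x = c j0 * chi {j0} x + (\<Sum>j\<in>?U - {j0}. c j * chi {j} x)"
      unfolding ex[OF x] using j0 by (simp add: sum.remove)
    also have "(\<Sum>j\<in>?U - {j0}. c j * chi {j} x) = 0" using cz by simp
    finally show "g x = c j0 * chi {j0} x" by simp
  qed
  show ?thesis
  proof (intro exI[of _ j0] conjI ballI j0(1))
    fix x y assume x: "x \<in> ?V" and y: "y \<in> ?V"
    have "g x = g y \<longleftrightarrow> chi {j0} x = chi {j0} y" using gx[OF x] gx[OF y] j0(2) by simp
    also have "\<dots> \<longleftrightarrow> (j0 \<in> x \<longleftrightarrow> j0 \<in> y)" by (simp add: chi_single)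
    finally show "g x = g y \<longleftrightarrow> (j0 \<in> x \<longleftrightarrow> j0 \<in> y)" .
  qed
qed

section \<open>Endomorphisms of \<open>H\<^sub>n\<^sub>,\<^sub>k\<close>\<close>

lemma H_adj_symd_slice:
  assumes "even k" and "x \<in> H_verts n" and "s \<in> slice n k"
  shows "H_adj n k x (symd x s)"
  using assms slice_subset_H_verts[of k n] H_verts_symd[of x n s]
  unfolding H_adj_def hdist_symd symd_cancel by (auto simp: slice_def)

lemma endo_card_symd_slice:
  assumes endo: "is_endo (H_verts n) (H_adj n k) f" and k: "even k"
    and x: "x \<in> H_verts n" and s: "s \<in> slice n k"
  shows "card (symd (f x) (f (symd x s))) = k"
proof -
  have "symd x s \<in> H_verts n"
    using H_verts_symd[OF x] s slice_subset_H_verts[OF k] by blast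
  hence "H_adj n k (f x) (f (symd x s))"
    using endo H_adj_symd_slice[OF k x s] x unfolding is_endo_def by blast
  thus ?thesis unfolding H_adj_def hdist_symd by simp
qed

text \<open>Summed over the coordinates \<open>i\<close>, the products \<open>chi {i} (f x) * chi {i} (f y)\<close> count
  \<open>n - 2 hdist (f x) (f y)\<close>, which equals \<open>n - 2k\<close> along every edge.\<close>

lemma endo_sum_cayley_form_coordinates:
  assumes endo: "is_endo (H_verts n) (H_adj n k) f" and k: "even k"
  shows "(\<Sum>i\<in>{0..<n}. cayley_form n (slice n k) (\<lambda>x. chi {i} (f x)))
       = real (card (H_verts n)) * (real (n choose k) * (real n - 2 * real k))"
proof -
  let ?V = "H_verts n" and ?S = "slice n k"
  have "(\<Sum>i\<in>{0..<n}. cayley_form n ?S (\<lambda>x. chi {i} (f x)))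
      = (\<Sum>x\<in>?V. \<Sum>s\<in>?S. \<Sum>i\<in>{0..<n}. chi {i} (f x) * chi {i} (f (symd x s)))"
    unfolding cayley_form_def by (subst sum.swap, rule sum.cong[OF refl], rule sum.swap)
  also have "\<dots> = (\<Sum>x\<in>?V. \<Sum>s\<in>?S. real n - 2 * real k)"
  proof (intro sum.cong refl)
    fix x s assume x: "x \<in> ?V" and s: "s \<in> ?S"
    have "symd x s \<in> ?V" using H_verts_symd[OF x] s slice_subset_H_verts[OF k] by blast
    hence "f x \<in> ?V" "f (symd x s) \<in> ?V" using endo x unfolding is_endo_def by auto
    hence "symd (f x) (f (symd x s)) \<subseteq> {0..<n}" unfolding H_verts_def by (intro symd_subset) auto
    hence "(\<Sum>i\<in>{0..<n}. chi {i} (symd (f x) (f (symd x s)))) = real n - 2 * real k"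
      using sum_chi_single endo_card_symd_slice[OF endo k x s] by simp
    thus "(\<Sum>i\<in>{0..<n}. chi {i} (f x) * chi {i} (f (symd x s))) = real n - 2 * real k"
      by (simp only: chi_symd[OF finite.emptyI[THEN finite.insertI], symmetric])
  qed
  also have "\<dots> = real (card ?V) * (real (card ?S) * (real n - 2 * real k))"
    by simp
  finally show ?thesis by (simp only: card_slice)
qed

text \<open>Each coordinate function has \<open>cayley_form \<ge> min_eigenvalue * card (H_verts n)\<close>, and by the
  previous lemma these bounds add up to an equality.\<close>

lemma endo_cayley_form_coordinate:
  assumes endo: "is_endo (H_verts n) (H_adj n k) f"
    and k: "even k" "n + 2 \<le> 2 * k" "k \<le> n - 1" and i: "i < n"
  shows "cayley_form n (slice n k) (\<lambda>x. chi {i} (f x)) = min_eigenvalue n k * real (card (H_verts n))"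
proof -
  let ?S = "slice n k" and ?m = "min_eigenvalue n k * real (card (H_verts n))"
  have norm: "(\<Sum>x\<in>H_verts n. chi {i} (f x) * chi {i} (f x)) = real (card (H_verts n))" for i
    by (simp add: chi_singleton_square)
  have ge: "?m \<le> cayley_form n ?S (\<lambda>x. chi {i} (f x))" for i
  proof -
    have "min_eigenvalue n k * (\<Sum>x\<in>H_verts n. chi {i} (f x) * chi {i} (f x))
        \<le> cayley_form n ?S (\<lambda>x. chi {i} (f x))"
      by (rule cayley_form_ge[OF slice_subset_H_verts[OF k(1)] min_eigenvalue_le_sum_chi_slice[OF _ k]]) blast
    thus ?thesis unfolding norm .
  qed
  have "(\<Sum>i\<in>{0..<n}. cayley_form n ?S (\<lambda>x. chi {i} (f x)) - ?m) = 0"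
    using endo_sum_cayley_form_coordinates[OF endo k(1)] k
    by (simp add: sum_subtractf min_eigenvalue_def)
  hence "\<forall>i\<in>{0..<n}. cayley_form n ?S (\<lambda>x. chi {i} (f x)) - ?m = 0"
    by (subst (asm) sum_nonneg_eq_0_iff) (use ge in auto)
  thus ?thesis using i by simp
qed

lemma endo_coordinate_dictator:
  assumes endo: "is_endo (H_verts n) (H_adj n k) f"
    and k: "even k" "n + 2 \<le> 2 * k" "k \<le> n - 1" and i: "i < n"
  shows "\<exists>j<n. \<forall>x\<in>H_verts n. \<forall>y\<in>H_verts n. (i \<in> f x \<longleftrightarrow> i \<in> f y) \<longleftrightarrow> (j \<in> x \<longleftrightarrow> j \<in> y)"
proof -
  let ?g = "\<lambda>x. chi {i} (f x)" and ?U = "{0..<n}"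
  have n5: "n \<ge> 5" using k by presburger
  have high_zero: "fourier n ?g a = 0"
    if "a \<in> Pow ?U" "card a \<noteq> 1" "card a \<noteq> n - 1" for a
  proof (rule fourier_eq_0_if_cayley_form_eq[OF slice_subset_H_verts[OF k(1)]])
    show "min_eigenvalue n k \<le> (\<Sum>t\<in>slice n k. chi a t)" if "a \<in> Pow ?U" for a
      using min_eigenvalue_le_sum_chi_slice[OF _ k] that by blast
    show "cayley_form n (slice n k) ?g = min_eigenvalue n k * (\<Sum>x\<in>H_verts n. ?g x * ?g x)"
      using endo_cayley_form_coordinate[OF endo k i] by (simp add: chi_singleton_square)
    show "min_eigenvalue n k < (\<Sum>t\<in>slice n k. chi a t)"
      using min_eigenvalue_less_sum_chi_slice[OF _ k] that by blast
  qed (use that in blast)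
  have "\<exists>j<n. \<forall>x\<in>H_verts n. \<forall>y\<in>H_verts n. ?g x = ?g y \<longleftrightarrow> (j \<in> x \<longleftrightarrow> j \<in> y)"
  proof (rule level_one_boolean_is_dictator[OF n5])
    show "?g x * ?g x = 1" for x by (rule chi_singleton_square)
    show "?g x = (\<Sum>j\<in>?U. ((fourier n ?g {j} + fourier n ?g (?U - {j})) / real (card (Pow ?U))) * chi {j} x)"
      if "x \<in> H_verts n" for x
      using fourier_expansion_level_one[of n ?g x] n5 high_zero that by simp
  qed
  thus ?thesis by (simp only: chi_singleton_eq_iff)
qed

text \<open>Comparing two \<open>k\<close>-subsets that differ in one element shows that \<open>M\<close> is constant.\<close>

lemma const_one_if_sum_slice_eq:
  fixes M :: "nat \<Rightarrow> nat"
  assumes k: "1 \<le> k" "k < n" and sum_M: "\<And>s. s \<in> slice n k \<Longrightarrow> (\<Sum>j\<in>s. M j) = k"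
    and j: "j < n"
  shows "M j = 1"
proof -
  let ?U = "{0..<n}"
  have M_eq: "M j = M j'" if j: "j \<in> ?U" and j': "j' \<in> ?U" and jj': "j \<noteq> j'" for j j'
  proof -
    have "k - 1 \<le> card (?U - {j, j'})" using j j' jj' k by (simp add: card_Diff_subset)
    then obtain s where s: "s \<subseteq> ?U - {j, j'}" "card s = k - 1" "finite s"
      by (rule obtain_subset_with_card_n)
    have nj: "j \<notin> s" "j' \<notin> s" using s by auto
    hence "insert j s \<in> slice n k" "insert j' s \<in> slice n k"
      using s j j' k unfolding slice_def by auto
    hence "M j + (\<Sum>i\<in>s. M i) = k" "M j' + (\<Sum>i\<in>s. M i) = k"
      using sum_M s(3) nj by (metis sum.insert)+
    thus ?thesis by simp
  qed
  obtain s where s: "s \<subseteq> ?U" "card s = k" "finite s"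
    using k by (metis card_atLeastLessThan diff_zero less_imp_le obtain_subset_with_card_n)
  have "s \<in> slice n k" using s unfolding slice_def by simp
  hence "k = (\<Sum>i\<in>s. M i)" using sum_M by simp
  also have "\<dots> = (\<Sum>i\<in>s. M j)"
    using s j M_eq by (intro sum.cong) (auto, metis atLeastLessThan_iff subsetD)
  also have "\<dots> = k * M j" using s by simp
  finally show "M j = 1" using k by (metis mult.right_neutral mult_left_cancel not_one_le_zero)
qed

text \<open>If coordinate \<open>i\<close> of \<open>f\<close> copies coordinate \<open>\<pi> i\<close> up to a flip, then \<open>hdist (f x) (f y)\<close>
  counts the \<open>i\<close> with \<open>\<pi> i \<in> symd x y\<close>; applied to the edges at \<open>{}\<close> this makes every fibre
  of \<open>\<pi>\<close> a singleton.\<close>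

lemma endo_hdist_eq_if_coordinates_copy:
  assumes endo: "is_endo (H_verts n) (H_adj n k) f"
    and k: "even k" "1 \<le> k" "k < n"
    and \<pi>: "\<And>i x y. i < n \<Longrightarrow> x \<in> H_verts n \<Longrightarrow> y \<in> H_verts n \<Longrightarrow>
             (i \<in> f x \<longleftrightarrow> i \<in> f y) \<longleftrightarrow> (\<pi> i \<in> x \<longleftrightarrow> \<pi> i \<in> y)"
    and x: "x \<in> H_verts n" and y: "y \<in> H_verts n"
  shows "hdist (f x) (f y) = hdist x y"
proof -
  let ?V = "H_verts n" and ?U = "{0..<n}"
  define M where "M j = card {i\<in>?U. \<pi> i = j}" for j
  have fV: "f z \<in> ?V" if "z \<in> ?V" for z using endo that unfolding is_endo_def by blast
  have Vsub: "z \<subseteq> ?U" if "z \<in> ?V" for z using that unfolding H_verts_def by auto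
  have symd_f: "symd (f u) (f v) = {i\<in>?U. \<pi> i \<in> symd u v}" if u: "u \<in> ?V" and v: "v \<in> ?V" for u v
  proof -
    have "symd (f u) (f v) \<subseteq> ?U" using Vsub fV u v symd_subset by blast
    moreover have "i \<in> symd (f u) (f v) \<longleftrightarrow> \<pi> i \<in> symd u v" if "i < n" for i
      using \<pi>[OF that u v] unfolding mem_symd by blast
    ultimately show ?thesis by auto
  qed
  have card_symd_f: "card (symd (f u) (f v)) = (\<Sum>j\<in>symd u v. M j)" if "u \<in> ?V" "v \<in> ?V" for u v
  proof -
    have fin: "finite (symd u v)" using Vsub that symd_subset finite_subset by (metis finite_atLeastLessThan)
    have "card {i\<in>?U. \<pi> i \<in> symd u v} = card (\<Union>j\<in>symd u v. {i\<in>?U. \<pi> i = j})"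
      by (rule arg_cong[where f = card]) blast
    also have "\<dots> = (\<Sum>j\<in>symd u v. M j)" unfolding M_def by (rule card_UN_disjoint[OF fin]) auto
    finally show ?thesis unfolding symd_f[OF that] .
  qed
  have "(\<Sum>j\<in>s. M j) = k" if s: "s \<in> slice n k" for s
  proof -
    have "s \<in> ?V" using s slice_subset_H_verts[OF k(1)] by blast
    thus ?thesis
      using endo_card_symd_slice[OF endo k(1) empty_in_H_verts s] card_symd_f[OF empty_in_H_verts] by simp
  qed
  hence M1: "M j = 1" if "j < n" for j using const_one_if_sum_slice_eq k that by blast
  have "symd x y \<subseteq> ?U" using Vsub x y symd_subset by blast
  hence "(\<Sum>j\<in>symd x y. M j) = (\<Sum>j\<in>symd x y. 1)" using M1 by (intro sum.cong) auto
  thus ?thesis unfolding hdist_symd card_symd_f[OF x y] by simp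
qed

lemma is_auto_if_hdist_preserving:
  assumes maps: "f ` H_verts n \<subseteq> H_verts n"
    and iso: "\<And>x y. x \<in> H_verts n \<Longrightarrow> y \<in> H_verts n \<Longrightarrow> hdist (f x) (f y) = hdist x y"
  shows "is_auto (H_verts n) (H_adj n k) f"
proof -
  let ?V = "H_verts n"
  have "inj_on f ?V"
  proof (rule inj_onI)
    fix x y assume "x \<in> ?V" "y \<in> ?V" "f x = f y"
    hence "hdist x y = 0" using iso[of x y] by (simp add: hdist_def)
    moreover have "finite (symd x y)"
      using \<open>x \<in> ?V\<close> \<open>y \<in> ?V\<close> unfolding H_verts_def symd_def by (auto intro: finite_subset)
    ultimately show "x = y" unfolding hdist_symd by (simp add: symd_eq_empty_iff)
  qed
  moreover have "f ` ?V = ?V"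
    using card_subset_eq[OF H_verts_finite maps] card_image[OF \<open>inj_on f ?V\<close>] by simp
  ultimately show ?thesis
    unfolding is_auto_def bij_betw_def H_adj_def using maps iso by auto
qed

theorem corollary4p6:
  fixes n k :: nat
  assumes "n \<ge> 1" and "even k" and "n + 2 \<le> 2 * k" and "k \<le> n - 1"
  shows "is_core (H_verts n) (H_adj n k)"
  unfolding is_core_def
proof (intro allI impI)
  fix f assume endo: "is_endo (H_verts n) (H_adj n k) f"
  obtain \<pi> where \<pi>: "\<And>i x y. i < n \<Longrightarrow> x \<in> H_verts n \<Longrightarrow> y \<in> H_verts n \<Longrightarrow>
      (i \<in> f x \<longleftrightarrow> i \<in> f y) \<longleftrightarrow> (\<pi> i \<in> x \<longleftrightarrow> \<pi> i \<in> y)"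
    using endo_coordinate_dictator[OF endo assms(2-4)] by metis
  have "hdist (f x) (f y) = hdist x y" if "x \<in> H_verts n" "y \<in> H_verts n" for x y
    by (rule endo_hdist_eq_if_coordinates_copy[OF endo _ _ _ \<pi> that]) (use assms in auto)
  moreover have "f ` H_verts n \<subseteq> H_verts n" using endo unfolding is_endo_def by blast
  ultimately show "is_auto (H_verts n) (H_adj n k) f" by (rule is_auto_if_hdist_preserving[rotated])
qed

end
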